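(* For every $\varepsilon>0$ and $n,d\in\mathbb{N}$, there exists an $\varepsilon$-$\nabla_0$DP algorithm for discrete distribution estimation over $\{0,1\}^d$ whose $\ell_2^2$ error is $\tilde O\!\left(\frac{\log d}{\varepsilon n}+\frac1n\right)$ with probability at least $0.9$, for every unknown distribution $\theta$.
   Context: Discrete distribution estimation: an unknown distribution $\theta=(\theta_x)_{x\in\{0,1\}^d}$ on $\{0,1\}^d$; the algorithm receives i.i.d. samples $x_1,\dots,x_n\sim\theta$ and outputs $\theta^{priv}\in[0,1]^{\{0,1\}^d}$; its $\ell_2^2$ error is $\sum_{x\in\{0,1\}^d}(\theta^{priv}_x-\theta_x)^2$. $\tilde O$ hides polylogarithmic factors. $M$ is $\varepsilon$-$\nabla_0$DP if for all datasets $D,D'\in(\{0,1\}^d)^n$ differing only in entry $i$ and all measurable $S$, $\Pr[M(D)\in S]\le e^{\varepsilon\|D_i-D'_i\|_0}\Pr[M(D')\in S]$, with $\|\cdot\|_0$ the Hamming distance. *)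

theory Defs
  imports "HOL-Probability.Probability"
begin

definition cube :: "nat \<Rightarrow> bool list set" where
  "cube d = {x. length x = d}"

definition datasets :: "nat \<Rightarrow> nat \<Rightarrow> bool list list set" where
  "datasets n d = {D. length D = n \<and> set D \<subseteq> cube d}"

definition hamming :: "bool list \<Rightarrow> bool list \<Rightarrow> nat" where
  "hamming x y = card {j. j < length x \<and> x ! j \<noteq> y ! j}"

definition out_space :: "nat \<Rightarrow> (bool list \<Rightarrow> real) measure" where
  "out_space d = PiM (cube d) (\<lambda>_. restrict_space borel {0..1})"

definition is_mechanism :: "nat \<Rightarrow> nat \<Rightarrow> (bool list list \<Rightarrow> (bool list \<Rightarrow> real) measure) \<Rightarrow> bool" where
  "is_mechanism n d M \<longleftrightarrow>
     (\<forall>D \<in> datasets n d. prob_space (M D) \<and> sets (M D) = sets (out_space d))"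

definition grad0_DP :: "real \<Rightarrow> nat \<Rightarrow> nat \<Rightarrow> (bool list list \<Rightarrow> (bool list \<Rightarrow> real) measure) \<Rightarrow> bool" where
  "grad0_DP \<epsilon> n d M \<longleftrightarrow>
     (\<forall>D \<in> datasets n d. \<forall>D' \<in> datasets n d. \<forall>i < n.
        (\<forall>j < n. j \<noteq> i \<longrightarrow> D ! j = D' ! j) \<longrightarrow>
        (\<forall>S \<in> sets (out_space d).
           measure (M D) S \<le> exp (\<epsilon> * real (hamming (D ! i) (D' ! i))) * measure (M D') S))"

definition l2sq_error :: "nat \<Rightarrow> (bool list \<Rightarrow> real) \<Rightarrow> bool list pmf \<Rightarrow> real" where
  "l2sq_error d t \<theta> = (\<Sum>x\<in>cube d. (t x - pmf \<theta> x)^2)"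

definition success_prob ::
  "nat \<Rightarrow> nat \<Rightarrow> (bool list list \<Rightarrow> (bool list \<Rightarrow> real) measure) \<Rightarrow> bool list pmf \<Rightarrow> real \<Rightarrow> real" where
  "success_prob n d M \<theta> b =
     (\<Sum>D\<in>datasets n d. (\<Prod>i<n. pmf \<theta> (D ! i)) *
        measure (M D) {t \<in> space (M D). l2sq_error d t \<theta> \<le> b})"

end

(*
  The mechanism counts, for every interval v of a dyadic decomposition of the d coordinates and
  every bit pattern u on v, how many samples agree with u on v, and perturbs each count by
  independent discrete Laplace noise.  Changing one bit of one sample changes two counts at each
  of the O(log d) intervals containing that bit, so noise of scale O(log d / epsilon) gives
  epsilon-nabla_0 privacy.  Heavy points are reconstructed bottom-up: a pattern survives at an
  interval if both halves survive and its own noisy count is at least 2r.  Only the at most n^2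
  concatenations of observed halves ever need accurate noise, so with r = O(log d log (d n) / epsilon)
  all of them are within r of the truth with probability 19/20.  Then every survivor is a true
  heavy point and every point of count at least 3r survives, which puts the output within 3r/n of
  the empirical distribution in squared l2 distance; the empirical distribution has expected
  squared error at most 1/n, hence error at most 20/n with probability 19/20 by Markov.
*)

theory Submission
  imports Defs
begin

section \<open>Samples and the empirical distribution\<close>

lemma finite_cube: "finite (cube d)"
  unfolding cube_def using finite_lists_length_eq[of "UNIV :: bool set" d] by simp

lemma card_cube: "card (cube d) = 2 ^ d"
  unfolding cube_def using card_lists_length_eq[of "UNIV :: bool set" d] by simp

lemma space_out_space: "space (out_space d) = (\<Pi>\<^sub>E x\<in>cube d. {0..1})"
  unfolding out_space_def by (simp add: space_PiM)

lemma measurable_out_space_component: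
  assumes "x \<in> cube d"
  shows "(\<lambda>t. t x) \<in> borel_measurable (out_space d)"
proof -
  have "(\<lambda>t. t x) \<in> out_space d \<rightarrow>\<^sub>M restrict_space borel {0..1::real}"
    unfolding out_space_def using measurable_component_singleton[OF assms] .
  then show ?thesis
    using measurable_restrict_space2_iff by blast
qed

lemma borel_measurable_l2sq_error: "(\<lambda>t. l2sq_error d t \<theta>) \<in> borel_measurable (out_space d)"
  unfolding l2sq_error_def by (intro borel_measurable_sum borel_measurable_power
      borel_measurable_diff measurable_out_space_component) auto

lemma l2sq_error_sublevel_in_sets:
  "{t \<in> space (out_space d). l2sq_error d t \<theta> \<le> b} \<in> sets (out_space d)"
  using borel_measurable_l2sq_error by measurable

definition sample_prob :: "nat \<Rightarrow> 'a pmf \<Rightarrow> 'a list \<Rightarrow> real" where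
  "sample_prob n \<theta> D = (\<Prod>k<n. pmf \<theta> (D ! k))"

lemma sample_prob_nonneg: "0 \<le> sample_prob n \<theta> D"
  unfolding sample_prob_def by (simp add: prod_nonneg)

lemma success_prob_eq_sum:
  "success_prob n d M \<theta> b =
     (\<Sum>D\<in>datasets n d. sample_prob n \<theta> D * measure (M D) {t \<in> space (M D). l2sq_error d t \<theta> \<le> b})"
  unfolding success_prob_def sample_prob_def ..

lemma finite_datasets: "finite (datasets n d)"
  unfolding datasets_def using finite_lists_length_eq[OF finite_cube] by (simp add: conj_commute)

lemma datasets_nth_in_cube: "D \<in> datasets n d \<Longrightarrow> k < n \<Longrightarrow> D ! k \<in> cube d"
  unfolding datasets_def by auto

lemma datasets_Suc: "datasets (Suc n) d = (\<lambda>(x, D). x # D) ` (cube d \<times> datasets n d)"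
  unfolding datasets_def by (auto simp: length_Suc_conv)

lemma sum_datasets_prod:
  "(\<Sum>D\<in>datasets n d. \<Prod>k<n. f k (D ! k)) = (\<Prod>k<n. \<Sum>x\<in>cube d. (f k x :: real))"
proof (induction n arbitrary: f)
  case 0
  have "datasets 0 d = {[]}" unfolding datasets_def by auto
  then show ?case by simp
next
  case (Suc n)
  have "inj_on (\<lambda>(x, D). x # D) (cube d \<times> datasets n d)" by (auto simp: inj_on_def)
  then have "(\<Sum>D\<in>datasets (Suc n) d. \<Prod>k<Suc n. f k (D ! k))
      = (\<Sum>(x, D)\<in>cube d \<times> datasets n d. \<Prod>k<Suc n. f k ((x # D) ! k))"
    unfolding datasets_Suc by (simp add: sum.reindex case_prod_unfold)
  also have "\<dots> = (\<Sum>(x, D)\<in>cube d \<times> datasets n d. f 0 x * (\<Prod>k<n. f (Suc k) (D ! k)))"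
    unfolding prod.lessThan_Suc_shift by simp
  also have "\<dots> = (\<Sum>x\<in>cube d. f 0 x) * (\<Sum>D\<in>datasets n d. \<Prod>k<n. f (Suc k) (D ! k))"
    by (simp add: sum_product sum.cartesian_product)
  also have "\<dots> = (\<Sum>x\<in>cube d. f 0 x) * (\<Prod>k<n. \<Sum>x\<in>cube d. f (Suc k) x)"
    using Suc.IH[of "\<lambda>k. f (Suc k)"] by simp
  also have "\<dots> = (\<Prod>k<Suc n. \<Sum>x\<in>cube d. f k x)"
    unfolding prod.lessThan_Suc_shift ..
  finally show ?case .
qed

lemma expectation_sample_prod:
  assumes "set_pmf \<theta> \<subseteq> cube d"
  shows "(\<Sum>D\<in>datasets n d. sample_prob n \<theta> D * (\<Prod>k<n. g k (D ! k)))
       = (\<Prod>k<n. \<Sum>x\<in>cube d. pmf \<theta> x * g k x)"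
  unfolding sample_prob_def prod.distrib[symmetric] by (rule sum_datasets_prod)

lemma sum_sample_prob:
  assumes "set_pmf \<theta> \<subseteq> cube d"
  shows "(\<Sum>D\<in>datasets n d. sample_prob n \<theta> D) = 1"
  using expectation_sample_prod[OF assms, of n "\<lambda>_ _. 1"] sum_pmf_eq_1[OF finite_cube assms] by simp

lemma expectation_sample:
  assumes \<theta>: "set_pmf \<theta> \<subseteq> cube d" and "i < n"
  shows "(\<Sum>D\<in>datasets n d. sample_prob n \<theta> D * g (D ! i)) = (\<Sum>x\<in>cube d. pmf \<theta> x * g x)"
proof -
  define f where "f k x = (if k = i then g x else 1)" for k x
  have "(\<Sum>x\<in>cube d. pmf \<theta> x * f k x) = (if k = i then (\<Sum>x\<in>cube d. pmf \<theta> x * g x) else 1)" for k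
    using sum_pmf_eq_1[OF finite_cube \<theta>] by (simp add: f_def)
  then show ?thesis
    using expectation_sample_prod[OF \<theta>, of n f] assms(2) by (simp add: f_def)
qed

lemma expectation_two_samples:
  assumes \<theta>: "set_pmf \<theta> \<subseteq> cube d" and "i < n" "j < n" "i \<noteq> j"
  shows "(\<Sum>D\<in>datasets n d. sample_prob n \<theta> D * (g (D ! i) * h (D ! j)))
       = (\<Sum>x\<in>cube d. pmf \<theta> x * g x) * (\<Sum>x\<in>cube d. pmf \<theta> x * h x)"
proof -
  define f where "f k x = (if k = i then g x else 1) * (if k = j then h x else 1)" for k x
  have "(\<Sum>x\<in>cube d. pmf \<theta> x * f k x) = (if k = i then (\<Sum>x\<in>cube d. pmf \<theta> x * g x) else 1)
          * (if k = j then (\<Sum>x\<in>cube d. pmf \<theta> x * h x) else 1)" for k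
    using sum_pmf_eq_1[OF finite_cube \<theta>] assms(4) by (simp add: f_def)
  then show ?thesis
    using expectation_sample_prod[OF \<theta>, of n f] assms(2,3)
    by (simp add: f_def prod.distrib)
qed

definition empirical :: "nat \<Rightarrow> 'a list \<Rightarrow> 'a \<Rightarrow> real" where
  "empirical n D x = card {k. k < n \<and> D ! k = x} / n"

lemma expectation_sum_samples_sq:
  assumes \<theta>: "set_pmf \<theta> \<subseteq> cube d" and centered: "(\<Sum>x\<in>cube d. pmf \<theta> x * Y x) = 0"
  shows "(\<Sum>D\<in>datasets n d. sample_prob n \<theta> D * (\<Sum>k<n. Y (D ! k))\<^sup>2)
       = n * (\<Sum>x\<in>cube d. pmf \<theta> x * (Y x)\<^sup>2)"
proof -
  have "(\<Sum>k<n. Y (D ! k))\<^sup>2 = (\<Sum>k<n. \<Sum>l<n. Y (D ! k) * Y (D ! l))" for D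
    by (simp add: power2_eq_square sum_product)
  then have "(\<Sum>D\<in>datasets n d. sample_prob n \<theta> D * (\<Sum>k<n. Y (D ! k))\<^sup>2)
      = (\<Sum>D\<in>datasets n d. \<Sum>k<n. \<Sum>l<n. sample_prob n \<theta> D * (Y (D ! k) * Y (D ! l)))"
    by (simp add: sum_distrib_left)
  also have "\<dots> = (\<Sum>k<n. \<Sum>l<n. \<Sum>D\<in>datasets n d. sample_prob n \<theta> D * (Y (D ! k) * Y (D ! l)))"
    by (subst sum.swap, rule sum.cong[OF refl], rule sum.swap)
  also have "\<dots> = (\<Sum>k<n. \<Sum>l<n. if k = l then (\<Sum>x\<in>cube d. pmf \<theta> x * (Y x)\<^sup>2) else 0)"
  proof (intro sum.cong refl)
    fix k l assume "k \<in> {..<n}" "l \<in> {..<n}"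
    then show "(\<Sum>D\<in>datasets n d. sample_prob n \<theta> D * (Y (D ! k) * Y (D ! l)))
        = (if k = l then \<Sum>x\<in>cube d. pmf \<theta> x * (Y x)\<^sup>2 else 0)"
      using expectation_sample[OF \<theta>, of k n "\<lambda>y. Y y * Y y"]
        expectation_two_samples[OF \<theta>, of k n l Y Y] centered
      by (cases "k = l") (simp_all add: power2_eq_square)
  qed
  also have "\<dots> = n * (\<Sum>x\<in>cube d. pmf \<theta> x * (Y x)\<^sup>2)"
    by simp
  finally show ?thesis .
qed

lemma expectation_empirical_sq_error:
  assumes \<theta>: "set_pmf \<theta> \<subseteq> cube d" and x: "x \<in> cube d" and n: "0 < n"
  shows "(\<Sum>D\<in>datasets n d. sample_prob n \<theta> D * (empirical n D x - pmf \<theta> x)\<^sup>2)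
       = pmf \<theta> x * (1 - pmf \<theta> x) / n"
proof -
  define Y where "Y y = of_bool (y = x) - pmf \<theta> x" for y
  have indicator: "(\<Sum>y\<in>cube d. pmf \<theta> y * of_bool (y = x)) = pmf \<theta> x"
    using x finite_cube by (simp add: of_bool_def if_distrib cong: if_cong)
  have total: "(\<Sum>y\<in>cube d. pmf \<theta> y) = 1"
    using sum_pmf_eq_1[OF finite_cube \<theta>] .
  have "(\<Sum>y\<in>cube d. pmf \<theta> y * Y y) = 0"
    unfolding Y_def right_diff_distrib sum_subtractf indicator sum_distrib_right[symmetric] total
    by simp
  moreover have "(\<Sum>y\<in>cube d. pmf \<theta> y * (Y y)\<^sup>2) = pmf \<theta> x * (1 - pmf \<theta> x)"
  proof -
    have expand: "pmf \<theta> y * (Y y)\<^sup>2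
        = pmf \<theta> y * of_bool (y = x) * (1 - 2 * pmf \<theta> x) + pmf \<theta> y * (pmf \<theta> x)\<^sup>2" for y
      by (simp add: Y_def power2_eq_square algebra_simps)
    have "(\<Sum>y\<in>cube d. pmf \<theta> y * (Y y)\<^sup>2) = pmf \<theta> x * (1 - 2 * pmf \<theta> x) + (pmf \<theta> x)\<^sup>2"
      unfolding expand sum.distrib sum_distrib_right[symmetric] indicator total by simp
    then show ?thesis
      by (simp add: power2_eq_square algebra_simps)
  qed
  moreover have "empirical n D x - pmf \<theta> x = (\<Sum>k<n. Y (D ! k)) / n" for D
  proof -
    have "{k. k < n \<and> D ! k = x} = {..<n} \<inter> {k. D ! k = x}"
      by auto
    then show ?thesis
      using n by (simp add: empirical_def Y_def sum_subtractf field_simps)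
  qed
  ultimately show ?thesis
    using expectation_sum_samples_sq[OF \<theta>, of Y n] n
    by (simp add: power_divide sum_divide_distrib[symmetric] power2_eq_square)
qed

lemma expectation_l2sq_error_empirical:
  assumes \<theta>: "set_pmf \<theta> \<subseteq> cube d" and n: "0 < n"
  shows "(\<Sum>D\<in>datasets n d. sample_prob n \<theta> D * l2sq_error d (empirical n D) \<theta>) \<le> 1 / n"
proof -
  have "(\<Sum>D\<in>datasets n d. sample_prob n \<theta> D * l2sq_error d (empirical n D) \<theta>)
      = (\<Sum>x\<in>cube d. pmf \<theta> x * (1 - pmf \<theta> x) / n)"
    unfolding l2sq_error_def sum_distrib_left
    by (subst sum.swap) (intro sum.cong refl expectation_empirical_sq_error[OF \<theta> _ n])
  also have "\<dots> \<le> (\<Sum>x\<in>cube d. pmf \<theta> x / n)"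
    by (intro sum_mono divide_right_mono) (auto intro: mult_left_le pmf_le_1)
  also have "\<dots> = 1 / n"
    unfolding sum_divide_distrib[symmetric] sum_pmf_eq_1[OF finite_cube \<theta>] ..
  finally show ?thesis .
qed

lemma markov_inequality_sum:
  fixes w f :: "'a \<Rightarrow> real"
  assumes "finite A" "\<And>x. x \<in> A \<Longrightarrow> 0 \<le> w x" "\<And>x. x \<in> A \<Longrightarrow> 0 \<le> f x" "0 < t"
  shows "(\<Sum>x\<in>{x\<in>A. t < f x}. w x) \<le> (\<Sum>x\<in>A. w x * f x) / t"
proof -
  have "t * (\<Sum>x\<in>{x\<in>A. t < f x}. w x) \<le> (\<Sum>x\<in>{x\<in>A. t < f x}. w x * f x)"
    unfolding sum_distrib_left using assms(2)
    by (intro sum_mono) (simp add: mult.commute mult_right_mono less_imp_le)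
  also have "\<dots> \<le> (\<Sum>x\<in>A. w x * f x)"
    using assms(1-3) by (intro sum_mono2) auto
  finally show ?thesis
    using assms(4) by (simp add: field_simps)
qed

lemma prob_empirical_l2sq_error_le:
  assumes \<theta>: "set_pmf \<theta> \<subseteq> cube d" and n: "0 < n"
  shows "19/20 \<le> (\<Sum>D\<in>{D\<in>datasets n d. l2sq_error d (empirical n D) \<theta> \<le> 20 / n}. sample_prob n \<theta> D)"
proof -
  let ?err = "\<lambda>D. l2sq_error d (empirical n D) \<theta>"
  have "(\<Sum>D\<in>{D\<in>datasets n d. 20 / n < ?err D}. sample_prob n \<theta> D)
      \<le> (\<Sum>D\<in>datasets n d. sample_prob n \<theta> D * ?err D) / (20 / n)"
    using n by (intro markov_inequality_sum finite_datasets sample_prob_nonneg)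
      (auto simp: l2sq_error_def intro: sum_nonneg)
  also have "\<dots> \<le> (1 / n) / (20 / n)"
    using n by (intro divide_right_mono expectation_l2sq_error_empirical[OF \<theta> n]) auto
  also have "\<dots> = 1/20"
    using n by simp
  finally have "(\<Sum>D\<in>{D\<in>datasets n d. 20 / n < ?err D}. sample_prob n \<theta> D) \<le> 1/20" .
  moreover have "(\<Sum>D\<in>{D\<in>datasets n d. ?err D \<le> 20 / n}. sample_prob n \<theta> D)
      + (\<Sum>D\<in>{D\<in>datasets n d. 20 / n < ?err D}. sample_prob n \<theta> D) = 1"
    unfolding sum_sample_prob[OF \<theta>, of n, symmetric]
    by (subst sum.union_disjoint[symmetric]) (auto intro: finite_subset[OF _ finite_datasets] intro!: sum.cong)
  ultimately show ?thesis
    by linarith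
qed

section \<open>Truncated discrete Laplace noise\<close>

definition laplace_weight :: "real \<Rightarrow> nat \<Rightarrow> nat \<Rightarrow> real" where
  "laplace_weight a c m = exp (- a * \<bar>real m - real c\<bar>)"

definition laplace_norm :: "real \<Rightarrow> nat \<Rightarrow> nat \<Rightarrow> real" where
  "laplace_norm a n c = (\<Sum>m\<le>n. laplace_weight a c m)"

text \<open>The two-sided geometric distribution centred at \<open>c\<close> with ratio \<open>exp (- a)\<close>,
  conditioned on \<open>{0..n}\<close>.\<close>

definition trunc_laplace :: "real \<Rightarrow> nat \<Rightarrow> nat \<Rightarrow> nat pmf" where
  "trunc_laplace a n c =
     embed_pmf (\<lambda>m. if m \<le> n then laplace_weight a c m / laplace_norm a n c else 0)"

lemma laplace_norm_pos: "0 < laplace_norm a n c"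
  unfolding laplace_norm_def laplace_weight_def by (intro sum_pos) auto

lemma pmf_trunc_laplace:
  "pmf (trunc_laplace a n c) m = (if m \<le> n then laplace_weight a c m / laplace_norm a n c else 0)"
  unfolding trunc_laplace_def
proof (rule pmf_embed_pmf)
  let ?f = "\<lambda>m. if m \<le> n then laplace_weight a c m / laplace_norm a n c else 0"
  show "0 \<le> ?f m" for m
    using laplace_norm_pos[of a n c] by (simp add: laplace_weight_def)
  have "(\<integral>\<^sup>+ m. ennreal (?f m) \<partial>count_space UNIV) = (\<Sum>m\<le>n. ennreal (?f m))"
    by (rule nn_integral_count_space') auto
  also have "\<dots> = ennreal (\<Sum>m\<le>n. laplace_weight a c m / laplace_norm a n c)"
    using laplace_norm_pos[of a n c] by (subst sum_ennreal[symmetric]) (auto simp: laplace_weight_def)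
  also have "(\<Sum>m\<le>n. laplace_weight a c m / laplace_norm a n c) = 1"
    using laplace_norm_pos[of a n c] unfolding sum_divide_distrib[symmetric] laplace_norm_def by simp
  finally show "(\<integral>\<^sup>+ m. ennreal (?f m) \<partial>count_space UNIV) = 1"
    by simp
qed

lemma laplace_weight_le_exp:
  assumes "0 \<le> a"
  shows "laplace_weight a c m \<le> exp (a * \<bar>real c - real c'\<bar>) * laplace_weight a c' m"
proof -
  have "a * \<bar>real m - real c'\<bar> \<le> a * \<bar>real m - real c\<bar> + a * \<bar>real c - real c'\<bar>"
    using assms by (simp add: distrib_left[symmetric] mult_left_mono)
  then show ?thesis
    unfolding laplace_weight_def by (simp add: exp_add[symmetric])
qed

lemma pmf_trunc_laplace_le_exp:
  assumes "0 \<le> a"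
  shows "pmf (trunc_laplace a n c) m \<le> exp (2 * a * \<bar>real c - real c'\<bar>) * pmf (trunc_laplace a n c') m"
proof (cases "m \<le> n")
  case True
  let ?E = "exp (a * \<bar>real c - real c'\<bar>)"
  have norm: "laplace_norm a n c' \<le> ?E * laplace_norm a n c"
    unfolding laplace_norm_def sum_distrib_left
    by (intro sum_mono) (metis laplace_weight_le_exp[OF assms] abs_minus_commute)
  have "laplace_weight a c m / laplace_norm a n c \<le> ?E * laplace_weight a c' m / laplace_norm a n c"
    using laplace_weight_le_exp[OF assms, of c m c'] laplace_norm_pos[of a n c]
    by (simp add: divide_right_mono)
  also have "\<dots> \<le> ?E * laplace_weight a c' m / (laplace_norm a n c' / ?E)"
    using laplace_norm_pos[of a n c'] laplace_norm_pos[of a n c] norm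
    by (intro divide_left_mono) (auto simp: laplace_weight_def divide_le_eq mult.commute)
  also have "\<dots> = exp (2 * a * \<bar>real c - real c'\<bar>) * (laplace_weight a c' m / laplace_norm a n c')"
    by (simp add: exp_add[symmetric])
  finally show ?thesis
    using True by (simp add: pmf_trunc_laplace)
qed (simp add: pmf_trunc_laplace)

lemma trunc_laplace_tail:
  assumes "0 \<le> a" "c \<le> n"
  shows "measure_pmf.prob (trunc_laplace a n c) {m. r \<le> \<bar>real m - real c\<bar>} \<le> (real n + 1) * exp (- a * r)"
proof -
  let ?B = "{m\<in>{..n}. r \<le> \<bar>real m - real c\<bar>}"
  have norm: "1 \<le> laplace_norm a n c"
    using member_le_sum[of c "{..n}" "laplace_weight a c"] assms(2)
    by (simp add: laplace_norm_def laplace_weight_def)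
  have "set_pmf (trunc_laplace a n c) \<subseteq> {..n}"
    by (auto simp: set_pmf_iff pmf_trunc_laplace split: if_splits)
  then have "measure_pmf.prob (trunc_laplace a n c) {m. r \<le> \<bar>real m - real c\<bar>}
      \<le> measure_pmf.prob (trunc_laplace a n c) ?B"
    by (subst measure_Int_set_pmf[symmetric]) (intro measure_pmf.finite_measure_mono, auto)
  also have "\<dots> = (\<Sum>m\<in>?B. pmf (trunc_laplace a n c) m)"
    by (rule measure_measure_pmf_finite) auto
  also have "\<dots> \<le> (\<Sum>m\<in>?B. exp (- a * r))"
  proof (rule sum_mono)
    fix m assume m: "m \<in> ?B"
    then have "laplace_weight a c m \<le> exp (- a * r) * laplace_norm a n c"
      using assms(1) norm unfolding laplace_weight_def
      by (intro order.trans[OF _ mult_left_mono[OF norm]]) (auto intro: mult_left_mono)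
    then show "pmf (trunc_laplace a n c) m \<le> exp (- a * r)"
      using m laplace_norm_pos[of a n c] by (simp add: pmf_trunc_laplace divide_le_eq)
  qed
  also have "\<dots> \<le> (real n + 1) * exp (- a * r)"
  proof -
    have "card ?B \<le> card {..n}"
      by (intro card_mono) auto
    then have "real (card ?B) \<le> n + 1"
      using of_nat_mono[of "card ?B" "Suc n"] by simp
    then show ?thesis
      by (simp add: mult_right_mono)
  qed
  finally show ?thesis .
qed

section \<open>Dyadic decomposition of the coordinates\<close>

text \<open>A node \<open>(a, b)\<close> stands for the half-open interval \<open>[a, b)\<close> of coordinate positions.\<close>

function dyadic_nodes :: "nat \<Rightarrow> nat \<Rightarrow> (nat \<times> nat) set" where
  "dyadic_nodes a b = (if b - a \<le> 1 then {(a, b)}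
     else insert (a, b) (dyadic_nodes a ((a + b) div 2) \<union> dyadic_nodes ((a + b) div 2) b))"
  by pat_completeness auto
termination by (relation "Wellfounded.measure (\<lambda>(a, b). b - a)") auto

declare dyadic_nodes.simps [simp del]

lemma dyadic_nodes_leaf: "b - a \<le> 1 \<Longrightarrow> dyadic_nodes a b = {(a, b)}"
  by (simp add: dyadic_nodes.simps)

lemma dyadic_nodes_split:
  "\<not> b - a \<le> 1 \<Longrightarrow>
     dyadic_nodes a b = insert (a, b) (dyadic_nodes a ((a + b) div 2) \<union> dyadic_nodes ((a + b) div 2) b)"
  by (simp add: dyadic_nodes.simps)

lemma finite_dyadic_nodes: "finite (dyadic_nodes a b)"
  by (induction a b rule: dyadic_nodes.induct) (simp add: dyadic_nodes.simps)

lemma dyadic_nodes_self: "(a, b) \<in> dyadic_nodes a b"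
  by (simp add: dyadic_nodes.simps)

lemma dyadic_nodes_bounds:
  "v \<in> dyadic_nodes a b \<Longrightarrow> a < b \<Longrightarrow> a \<le> fst v \<and> fst v < snd v \<and> snd v \<le> b"
proof (induction a b rule: dyadic_nodes.induct)
  case (1 a b)
  show ?case
  proof (cases "b - a \<le> 1")
    case True
    then show ?thesis using "1.prems" by (simp add: dyadic_nodes_leaf)
  next
    case False
    let ?m = "(a + b) div 2"
    have "a < ?m" "?m < b"
      using False by auto
    moreover have "v = (a, b) \<or> v \<in> dyadic_nodes a ?m \<or> v \<in> dyadic_nodes ?m b"
      using "1.prems"(1) False by (simp add: dyadic_nodes_split)
    ultimately show ?thesis
      using "1.IH"(1)[OF False] "1.IH"(2)[OF False] "1.prems"(2) by fastforce
  qed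
qed

lemma card_dyadic_nodes: "a < b \<Longrightarrow> card (dyadic_nodes a b) \<le> 2 * (b - a) - 1"
proof (induction a b rule: dyadic_nodes.induct)
  case (1 a b)
  show ?case
  proof (cases "b - a \<le> 1")
    case True
    then show ?thesis using "1.prems" by (simp add: dyadic_nodes_leaf)
  next
    case False
    let ?m = "(a + b) div 2"
    have m: "a < ?m" "?m < b"
      using False by auto
    have "card (dyadic_nodes a b) \<le> Suc (card (dyadic_nodes a ?m \<union> dyadic_nodes ?m b))"
      unfolding dyadic_nodes_split[OF False] by (simp add: card_insert_if finite_dyadic_nodes)
    also have "\<dots> \<le> Suc (card (dyadic_nodes a ?m) + card (dyadic_nodes ?m b))"
      using card_Un_le by simp
    also have "\<dots> \<le> Suc ((2 * (?m - a) - 1) + (2 * (b - ?m) - 1))"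
      using "1.IH"(1)[OF False m(1)] "1.IH"(2)[OF False m(2)] by simp
    also have "\<dots> = 2 * (b - a) - 1"
      using m by simp
    finally show ?thesis .
  qed
qed

lemma card_dyadic_nodes_covering:
  "a < b \<Longrightarrow> b - a \<le> 2 ^ k \<Longrightarrow> card {v \<in> dyadic_nodes a b. fst v \<le> j \<and> j < snd v} \<le> k + 1"
proof (induction a b arbitrary: k rule: dyadic_nodes.induct)
  case (1 a b)
  let ?S = "\<lambda>a b. {v \<in> dyadic_nodes a b. fst v \<le> j \<and> j < snd v}"
  have fin: "finite (?S a b)" for a b
    by (simp add: finite_dyadic_nodes)
  show ?case
  proof (cases "b - a \<le> 1")
    case True
    then have "card (?S a b) \<le> card {(a, b)}"
      by (intro card_mono) (auto simp: dyadic_nodes_leaf)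
    then show ?thesis by simp
  next
    case big: False
    let ?m = "(a + b) div 2"
    have m: "a < ?m" "?m < b"
      using big by auto
    obtain k' where k: "k = Suc k'"
      using big "1.prems"(2) by (cases k) auto
    have halves: "?m - a \<le> 2 ^ k'" "b - ?m \<le> 2 ^ k'"
      using "1.prems"(2) unfolding k by auto
    have union: "card (?S a ?m \<union> ?S ?m b) \<le> k"
    proof (cases "j < ?m")
      case True
      then have empty: "?S ?m b = {}"
        using dyadic_nodes_bounds[of _ ?m b] m(2) by force
      show ?thesis
        unfolding empty Un_empty_right using "1.IH"(1)[OF big m(1) halves(1)] k by simp
    next
      case False
      then have empty: "?S a ?m = {}"
        using dyadic_nodes_bounds[of _ a ?m] m(1) by force
      show ?thesis
        unfolding empty Un_empty_left using "1.IH"(2)[OF big m(2) halves(2)] k by simp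
    qed
    have "?S a b \<subseteq> insert (a, b) (?S a ?m \<union> ?S ?m b)"
      unfolding dyadic_nodes_split[OF big] by blast
    then have "card (?S a b) \<le> card (insert (a, b) (?S a ?m \<union> ?S ?m b))"
      using fin by (intro card_mono) auto
    also have "\<dots> \<le> Suc (card (?S a ?m \<union> ?S ?m b))"
      using fin by (simp add: card_insert_if)
    finally show ?thesis
      using union by simp
  qed
qed

section \<open>Block counts and bottom-up reconstruction\<close>

definition block :: "nat \<times> nat \<Rightarrow> 'a list \<Rightarrow> 'a list" where
  "block v x = take (snd v - fst v) (drop (fst v) x)"

lemma block_append: "a \<le> m \<Longrightarrow> m \<le> b \<Longrightarrow> block (a, b) x = block (a, m) x @ block (m, b) x"
proof -
  assume "a \<le> m" "m \<le> b"
  then have "take (b - a) (drop a x) = take ((m - a) + (b - m)) (drop a x)"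
    by simp
  also have "\<dots> = take (m - a) (drop a x) @ take (b - m) (drop m x)"
    using \<open>a \<le> m\<close> by (simp only: take_add drop_drop) simp
  finally show ?thesis
    unfolding block_def by simp
qed

lemma length_block: "b \<le> length x \<Longrightarrow> length (block (a, b) x) = b - a"
  unfolding block_def by simp

lemma block_full: "block (0, length x) x = x"
  unfolding block_def by simp

lemma block_neq_imp_nth_neq:
  assumes "block v x \<noteq> block v y" "length x = length y" "snd v \<le> length x"
  shows "\<exists>j. fst v \<le> j \<and> j < snd v \<and> x ! j \<noteq> y ! j"
  using assms unfolding block_def by (auto intro!: nth_equalityI)

definition block_count :: "nat \<Rightarrow> 'a list list \<Rightarrow> nat \<times> nat \<Rightarrow> 'a list \<Rightarrow> nat" where
  "block_count n D v u = card {k. k < n \<and> block v (D ! k) = u}"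

definition observed_blocks :: "nat \<Rightarrow> 'a list list \<Rightarrow> nat \<times> nat \<Rightarrow> 'a list set" where
  "observed_blocks n D v = (\<lambda>k. block v (D ! k)) ` {..<n}"

lemma block_count_le: "block_count n D v u \<le> n"
proof -
  have "block_count n D v u \<le> card {..<n}"
    unfolding block_count_def by (intro card_mono) auto
  then show ?thesis
    by simp
qed

lemma observed_blocks_if_block_count_pos:
  "0 < block_count n D v u \<Longrightarrow> u \<in> observed_blocks n D v"
  unfolding block_count_def observed_blocks_def by (auto dest: card_gt_0_iff[THEN iffD1])

lemma block_count_le_halves:
  assumes D: "D \<in> datasets n d" and "a \<le> m" "m \<le> b" "b \<le> d"
  shows "block_count n D (a, b) u \<le> block_count n D (a, m) (take (m - a) u)"
    and "block_count n D (a, b) u \<le> block_count n D (m, b) (drop (m - a) u)"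
proof -
  have "block (a, m) (D ! k) = take (m - a) u \<and> block (m, b) (D ! k) = drop (m - a) u"
    if "k < n" "block (a, b) (D ! k) = u" for k
  proof -
    have "length (block (a, m) (D ! k)) = m - a"
      using datasets_nth_in_cube[OF D that(1)] assms by (intro length_block) (auto simp: cube_def)
    then show ?thesis
      using that(2) block_append[OF assms(2,3), of "D ! k"] by auto
  qed
  then show "block_count n D (a, b) u \<le> block_count n D (a, m) (take (m - a) u)"
    and "block_count n D (a, b) u \<le> block_count n D (m, b) (drop (m - a) u)"
    unfolding block_count_def by (auto intro!: card_mono)
qed

lemma block_full_dataset: "D \<in> datasets n d \<Longrightarrow> k < n \<Longrightarrow> block (0, d) (D ! k) = D ! k"
  using block_full[of "D ! k"] datasets_nth_in_cube[of D n d k] by (simp add: cube_def)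

lemma empirical_eq_block_count:
  "D \<in> datasets n d \<Longrightarrow> empirical n D x = block_count n D (0, d) x / n"
  unfolding empirical_def block_count_def by (metis (lifting) block_full_dataset)

lemma sum_block_count_full:
  assumes D: "D \<in> datasets n d"
  shows "(\<Sum>x\<in>cube d. real (block_count n D (0, d) x)) = n"
proof -
  have "{..<n} = (\<Union>x\<in>cube d. {k. k < n \<and> block (0, d) (D ! k) = x})"
    using datasets_nth_in_cube[OF D] block_full_dataset[OF D] by auto
  then have "n = card (\<Union>x\<in>cube d. {k. k < n \<and> block (0, d) (D ! k) = x})"
    by (metis card_lessThan)
  also have "\<dots> = (\<Sum>x\<in>cube d. block_count n D (0, d) x)"
    unfolding block_count_def by (rule card_UN_disjoint) (auto simp: finite_cube)
  finally have "n = (\<Sum>x\<in>cube d. block_count n D (0, d) x)" .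
  then show ?thesis
    by (metis of_nat_sum)
qed

text \<open>The cells whose noisy counts must be accurate.  At a leaf these are all patterns, since
  an unobserved pattern could otherwise survive; at an inner node a survivor is a concatenation of
  surviving, hence observed, halves.\<close>

definition candidates :: "nat \<Rightarrow> bool list list \<Rightarrow> nat \<times> nat \<Rightarrow> bool list set" where
  "candidates n D v = (case v of (a, b) \<Rightarrow>
     if b - a \<le> 1 then cube (b - a)
     else (\<lambda>(u, w). u @ w) `
            (observed_blocks n D (a, (a + b) div 2) \<times> observed_blocks n D ((a + b) div 2, b)))"

type_synonym cell = "(nat \<times> nat) \<times> bool list"

definition cells :: "nat \<Rightarrow> cell set" where
  "cells d = (SIGMA v:dyadic_nodes 0 d. cube (snd v - fst v))"

function survivors :: "(cell \<Rightarrow> nat) \<Rightarrow> real \<Rightarrow> nat \<Rightarrow> nat \<Rightarrow> bool list set" where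
  "survivors N T a b = (if b - a \<le> 1 then {u \<in> cube (b - a). T \<le> N ((a, b), u)}
     else {u @ w | u w. u \<in> survivors N T a ((a + b) div 2) \<and> w \<in> survivors N T ((a + b) div 2) b
                         \<and> T \<le> N ((a, b), u @ w)})"
  by pat_completeness auto
termination by (relation "Wellfounded.measure (\<lambda>(N, T, a, b). b - a)") auto

declare survivors.simps [simp del]

lemma survivors_leaf: "b - a \<le> 1 \<Longrightarrow> survivors N T a b = {u \<in> cube (b - a). T \<le> N ((a, b), u)}"
  by (simp add: survivors.simps)

lemma survivors_split:
  "\<not> b - a \<le> 1 \<Longrightarrow> survivors N T a b =
     {u @ w | u w. u \<in> survivors N T a ((a + b) div 2) \<and> w \<in> survivors N T ((a + b) div 2) b
                   \<and> T \<le> N ((a, b), u @ w)}"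
  by (subst survivors.simps) simp

definition accurate :: "nat \<Rightarrow> bool list list \<Rightarrow> real \<Rightarrow> (cell \<Rightarrow> nat) \<Rightarrow> nat \<Rightarrow> nat \<Rightarrow> bool" where
  "accurate n D r N a b \<longleftrightarrow>
     (\<forall>v\<in>dyadic_nodes a b. \<forall>u\<in>candidates n D v. \<bar>real (N (v, u)) - real (block_count n D v u)\<bar> < r)"

lemma finite_observed_blocks: "finite (observed_blocks n D v)"
  unfolding observed_blocks_def by simp

lemma card_observed_blocks: "card (observed_blocks n D v) \<le> n"
  unfolding observed_blocks_def using card_image_le[of "{..<n}"] by simp

lemma finite_candidates: "finite (candidates n D v)"
  unfolding candidates_def by (simp add: case_prod_unfold finite_cube finite_observed_blocks)

lemma card_candidates:
  assumes "0 < n" "a < b"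
  shows "card (candidates n D (a, b)) \<le> 2 * n\<^sup>2"
proof (cases "b - a \<le> 1")
  case True
  then have "b - a = 1"
    using assms(2) by simp
  then show ?thesis
    using assms(1) card_cube[of 1] by (simp add: candidates_def)
next
  case False
  let ?O1 = "observed_blocks n D (a, (a + b) div 2)" and ?O2 = "observed_blocks n D ((a + b) div 2, b)"
  have "card (candidates n D (a, b)) \<le> card (?O1 \<times> ?O2)"
    using False card_image_le[of "?O1 \<times> ?O2" "\<lambda>(u, w). u @ w"]
    by (simp add: candidates_def finite_observed_blocks)
  also have "\<dots> \<le> n * n"
    unfolding card_cartesian_product by (intro mult_mono card_observed_blocks) auto
  finally show ?thesis
    by (simp add: power2_eq_square)
qed

lemma length_observed_blocks:
  "D \<in> datasets n d \<Longrightarrow> b \<le> d \<Longrightarrow> u \<in> observed_blocks n D (a, b) \<Longrightarrow> length u = b - a"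
  unfolding observed_blocks_def
  by (auto dest!: datasets_nth_in_cube intro!: length_block simp: cube_def)

lemma candidates_subset_cube:
  assumes D: "D \<in> datasets n d" and "b \<le> d"
  shows "candidates n D (a, b) \<subseteq> cube (b - a)"
proof (cases "b - a \<le> 1")
  case False
  let ?m = "(a + b) div 2"
  have "?m \<le> d"
    using False assms(2) by arith
  then have "length u = ?m - a" if "u \<in> observed_blocks n D (a, ?m)" for u
    using length_observed_blocks[OF D _ that] by simp
  moreover have "length w = b - ?m" if "w \<in> observed_blocks n D (?m, b)" for w
    using length_observed_blocks[OF D assms(2) that] .
  ultimately show ?thesis
    using False by (auto simp: candidates_def cube_def)
qed (simp add: candidates_def)

lemma accurate_node:
  "accurate n D r N a b \<Longrightarrow> u \<in> candidates n D (a, b) \<Longrightarrow>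
     \<bar>real (N ((a, b), u)) - real (block_count n D (a, b) u)\<bar> < r"
  unfolding accurate_def using dyadic_nodes_self by blast

lemma accurate_halves:
  assumes "accurate n D r N a b" "\<not> b - a \<le> 1"
  shows "accurate n D r N a ((a + b) div 2)" "accurate n D r N ((a + b) div 2) b"
  using assms unfolding accurate_def dyadic_nodes_split[OF assms(2)] by blast+

lemma survivors_sound:
  assumes "accurate n D r N a b" "0 \<le> r" "u \<in> survivors N (2 * r) a b"
  shows "r < block_count n D (a, b) u \<and> \<bar>real (N ((a, b), u)) - real (block_count n D (a, b) u)\<bar> < r"
  using assms
proof (induction a b arbitrary: u rule: dyadic_nodes.induct)
  case (1 a b)
  have "u \<in> candidates n D (a, b) \<and> 2 * r \<le> N ((a, b), u)"
  proof (cases "b - a \<le> 1")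
    case True
    then show ?thesis using "1.prems"(3) by (simp add: survivors_leaf candidates_def)
  next
    case False
    let ?m = "(a + b) div 2"
    obtain u1 u2 where u: "u = u1 @ u2" "u1 \<in> survivors N (2 * r) a ?m" "u2 \<in> survivors N (2 * r) ?m b"
      "2 * r \<le> N ((a, b), u)"
      using "1.prems"(3) unfolding survivors_split[OF False] by blast
    have "u1 \<in> observed_blocks n D (a, ?m)" "u2 \<in> observed_blocks n D (?m, b)"
      using "1.IH"(1)[OF False accurate_halves(1)[OF "1.prems"(1) False] "1.prems"(2) u(2)]
        "1.IH"(2)[OF False accurate_halves(2)[OF "1.prems"(1) False] "1.prems"(2) u(3)] "1.prems"(2)
      by (auto intro!: observed_blocks_if_block_count_pos)
    then show ?thesis
      using u False by (auto simp: candidates_def)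
  qed
  then show ?case
    using accurate_node[OF "1.prems"(1)] by fastforce
qed

lemma survivors_complete:
  assumes "D \<in> datasets n d" "b \<le> d" "accurate n D r N a b" "0 < r"
    and "length u = b - a" "3 * r \<le> block_count n D (a, b) u"
  shows "u \<in> survivors N (2 * r) a b"
  using assms(2-)
proof (induction a b arbitrary: u rule: dyadic_nodes.induct)
  case (1 a b)
  have "u \<in> candidates n D (a, b) \<and> (2 * r \<le> N ((a, b), u) \<longrightarrow> u \<in> survivors N (2 * r) a b)"
  proof (cases "b - a \<le> 1")
    case True
    then show ?thesis
      using "1.prems"(4) by (simp add: survivors_leaf candidates_def cube_def)
  next
    case False
    let ?m = "(a + b) div 2"
    let ?u1 = "take (?m - a) u" and ?u2 = "drop (?m - a) u"
    have m: "a \<le> ?m" "?m \<le> b"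
      using False by auto
    then have "real (block_count n D (a, b) u) \<le> block_count n D (a, ?m) ?u1"
      "real (block_count n D (a, b) u) \<le> block_count n D (?m, b) ?u2"
      using block_count_le_halves[OF assms(1) _ _ "1.prems"(1)] by simp_all
    then have counts: "3 * r \<le> block_count n D (a, ?m) ?u1" "3 * r \<le> block_count n D (?m, b) ?u2"
      using "1.prems"(5) by linarith+
    have surv: "?u1 \<in> survivors N (2 * r) a ?m" "?u2 \<in> survivors N (2 * r) ?m b"
      using "1.IH"(1)[OF False _ accurate_halves(1)[OF "1.prems"(2) False] "1.prems"(3) _ counts(1)]
        "1.IH"(2)[OF False "1.prems"(1) accurate_halves(2)[OF "1.prems"(2) False] "1.prems"(3) _ counts(2)]
        "1.prems"(1,4) m by simp_all
    have "0 < real (block_count n D (a, ?m) ?u1)" "0 < real (block_count n D (?m, b) ?u2)"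
      using counts "1.prems"(3) by linarith+
    then have "?u1 \<in> observed_blocks n D (a, ?m)" "?u2 \<in> observed_blocks n D (?m, b)"
      by (simp_all add: observed_blocks_if_block_count_pos)
    then have "?u1 @ ?u2 \<in> candidates n D (a, b)"
      unfolding candidates_def using False by (auto intro!: image_eqI[where x = "(?u1, ?u2)"])
    moreover have "?u1 @ ?u2 \<in> survivors N (2 * r) a b" if "2 * r \<le> N ((a, b), ?u1 @ ?u2)"
      unfolding survivors_split[OF False] using surv that by blast
    ultimately show ?thesis
      by simp
  qed
  then show ?case
    using accurate_node[OF "1.prems"(2)] "1.prems"(5) by fastforce
qed

definition estimate :: "nat \<Rightarrow> nat \<Rightarrow> real \<Rightarrow> (cell \<Rightarrow> nat) \<Rightarrow> bool list \<Rightarrow> real" where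
  "estimate n d T N = (\<lambda>x\<in>cube d. if x \<in> survivors N T 0 d then min 1 (N ((0, d), x) / n) else 0)"

lemma estimate_in_space: "estimate n d T N \<in> space (out_space d)"
  unfolding space_out_space estimate_def by auto

lemma sq_estimate_minus_empirical_le:
  assumes D: "D \<in> datasets n d" and n: "0 < n" and r: "0 < r" and acc: "accurate n D r N 0 d"
    and x: "x \<in> cube d"
  shows "(estimate n d (2 * r) N x - empirical n D x)\<^sup>2 \<le> 3 * r * block_count n D (0, d) x / (real n)\<^sup>2"
proof -
  let ?c = "real (block_count n D (0, d) x)"
  show ?thesis
  proof (cases "x \<in> survivors N (2 * r) 0 d")
    case True
    let ?N = "real (N ((0, d), x))"
    have sound: "r < ?c" "\<bar>?N - ?c\<bar> < r"
      using survivors_sound[OF acc _ True] r by auto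
    have "?c / n \<le> 1"
      using block_count_le[of n D "(0, d)" x] n by simp
    then have "\<bar>estimate n d (2 * r) N x - empirical n D x\<bar> \<le> \<bar>?N / n - ?c / n\<bar>"
      using x True by (simp add: estimate_def empirical_eq_block_count[OF D] min_def)
    also have "\<dots> = \<bar>?N - ?c\<bar> / n"
      by (simp add: diff_divide_distrib[symmetric])
    finally have "(estimate n d (2 * r) N x - empirical n D x)\<^sup>2 \<le> (\<bar>?N - ?c\<bar> / n)\<^sup>2"
      by (metis abs_ge_zero power2_abs power_mono)
    also have "\<dots> \<le> r\<^sup>2 / (real n)\<^sup>2"
      unfolding power_divide using sound(2) by (intro divide_right_mono power_mono) auto
    also have "\<dots> \<le> 3 * r * ?c / (real n)\<^sup>2"
      using sound(1) r by (intro divide_right_mono) (auto simp: power2_eq_square)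
    finally show ?thesis .
  next
    case False
    then have "?c < 3 * r"
      using survivors_complete[OF D order.refl acc r, of x] x by (force simp: cube_def)
    then have "?c * ?c \<le> 3 * r * ?c"
      by (simp add: mult_right_mono)
    then show ?thesis
      using x False by (simp add: estimate_def empirical_eq_block_count[OF D] power_divide
          power2_eq_square divide_right_mono)
  qed
qed

lemma sum_sq_estimate_minus_empirical_le:
  assumes D: "D \<in> datasets n d" and n: "0 < n" and "0 < r" "accurate n D r N 0 d"
  shows "(\<Sum>x\<in>cube d. (estimate n d (2 * r) N x - empirical n D x)\<^sup>2) \<le> 3 * r / n"
proof -
  have "(\<Sum>x\<in>cube d. (estimate n d (2 * r) N x - empirical n D x)\<^sup>2)
      \<le> (\<Sum>x\<in>cube d. 3 * r * block_count n D (0, d) x / (real n)\<^sup>2)"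
    by (intro sum_mono sq_estimate_minus_empirical_le[OF assms])
  also have "\<dots> = 3 * r / n"
    using n by (simp add: sum_divide_distrib[symmetric] sum_distrib_left[symmetric]
        sum_block_count_full[OF D] power2_eq_square)
  finally show ?thesis .
qed

lemma power2_diff_triangle_le: "((x :: real) - z)\<^sup>2 \<le> 2 * (x - y)\<^sup>2 + 2 * (y - z)\<^sup>2"
  using zero_le_power2[of "x - 2 * y + z"] by (simp add: power2_eq_square algebra_simps)

lemma l2sq_error_estimate_le:
  assumes "D \<in> datasets n d" "0 < n" "0 < r" "accurate n D r N 0 d"
  shows "l2sq_error d (estimate n d (2 * r) N) \<theta> \<le> 6 * r / n + 2 * l2sq_error d (empirical n D) \<theta>"
proof -
  have "l2sq_error d (estimate n d (2 * r) N) \<theta>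
      \<le> (\<Sum>x\<in>cube d. 2 * (estimate n d (2 * r) N x - empirical n D x)\<^sup>2
                      + 2 * (empirical n D x - pmf \<theta> x)\<^sup>2)"
    unfolding l2sq_error_def by (intro sum_mono power2_diff_triangle_le)
  also have "\<dots> \<le> 6 * r / n + 2 * l2sq_error d (empirical n D) \<theta>"
    using sum_sq_estimate_minus_empirical_le[OF assms]
    by (simp add: l2sq_error_def sum.distrib sum_distrib_left[symmetric])
  finally show ?thesis .
qed

section \<open>Noisy counts: accuracy and privacy\<close>

definition noisy_counts :: "real \<Rightarrow> nat \<Rightarrow> nat \<Rightarrow> bool list list \<Rightarrow> (cell \<Rightarrow> nat) pmf" where
  "noisy_counts a n d D = Pi_pmf (cells d) 0 (\<lambda>(v, u). trunc_laplace a n (block_count n D v u))"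

lemma finite_cells: "finite (cells d)"
  unfolding cells_def by (intro finite_SigmaI finite_dyadic_nodes finite_cube)

lemma prob_noisy_count_far:
  assumes "(v, u) \<in> cells d" "0 \<le> a"
  shows "measure_pmf.prob (noisy_counts a n d D)
           {N. r \<le> \<bar>real (N (v, u)) - real (block_count n D v u)\<bar>} \<le> (real n + 1) * exp (- a * r)"
proof -
  let ?c = "block_count n D v u"
  have component: "map_pmf (\<lambda>N. N (v, u)) (noisy_counts a n d D) = trunc_laplace a n ?c"
    unfolding noisy_counts_def Pi_pmf_component[OF finite_cells]
    by (subst if_P[OF assms(1)]) simp
  have "measure_pmf.prob (noisy_counts a n d D) {N. r \<le> \<bar>real (N (v, u)) - real ?c\<bar>}
      = measure_pmf.prob (map_pmf (\<lambda>N. N (v, u)) (noisy_counts a n d D)) {m. r \<le> \<bar>real m - real ?c\<bar>}"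
    by simp
  also have "\<dots> = measure_pmf.prob (trunc_laplace a n ?c) {m. r \<le> \<bar>real m - real ?c\<bar>}"
    unfolding component ..
  also have "\<dots> \<le> (real n + 1) * exp (- a * r)"
    by (rule trunc_laplace_tail[OF assms(2) block_count_le])
  finally show ?thesis .
qed

lemma card_candidate_cells:
  assumes n: "0 < n" and d: "0 < d"
  shows "card (SIGMA v:dyadic_nodes 0 d. candidates n D v) \<le> 4 * d * n\<^sup>2"
proof -
  have "card (SIGMA v:dyadic_nodes 0 d. candidates n D v) = (\<Sum>v\<in>dyadic_nodes 0 d. card (candidates n D v))"
    by (simp add: card_SigmaI finite_dyadic_nodes finite_candidates)
  also have "\<dots> \<le> (\<Sum>v\<in>dyadic_nodes 0 d. 2 * n\<^sup>2)"
    using card_candidates[OF n] dyadic_nodes_bounds[OF _ d] by (intro sum_mono) fastforce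
  also have "\<dots> = card (dyadic_nodes 0 d) * (2 * n\<^sup>2)"
    by simp
  also have "\<dots> \<le> (2 * d) * (2 * n\<^sup>2)"
    using card_dyadic_nodes[OF d] by (intro mult_le_mono1) linarith
  finally show ?thesis
    by simp
qed

lemma prob_not_accurate:
  assumes D: "D \<in> datasets n d" and n: "0 < n" and d: "0 < d" and a: "0 \<le> a"
  shows "measure_pmf.prob (noisy_counts a n d D) {N. \<not> accurate n D r N 0 d}
           \<le> 4 * real d * (real n)\<^sup>2 * ((real n + 1) * exp (- a * r))"
proof -
  let ?S = "SIGMA v:dyadic_nodes 0 d. candidates n D v"
  let ?far = "\<lambda>c. {N. r \<le> \<bar>real (N c) - real (block_count n D (fst c) (snd c))\<bar>}"
  have "?S \<subseteq> cells d"
  proof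
    fix c assume "c \<in> ?S"
    then obtain a b u where c: "c = ((a, b), u)" "(a, b) \<in> dyadic_nodes 0 d" "u \<in> candidates n D (a, b)"
      by auto
    then show "c \<in> cells d"
      using candidates_subset_cube[OF D, of b a] dyadic_nodes_bounds[OF c(2) d] by (auto simp: cells_def)
  qed
  have inaccurate: "{N. \<not> accurate n D r N 0 d} = (\<Union>c\<in>?S. ?far c)"
    unfolding accurate_def by force
  have "measure_pmf.prob (noisy_counts a n d D) {N. \<not> accurate n D r N 0 d}
      \<le> (\<Sum>c\<in>?S. measure_pmf.prob (noisy_counts a n d D) (?far c))"
    unfolding inaccurate by (rule measure_UNION_le) (auto simp: finite_dyadic_nodes finite_candidates)
  also have "\<dots> \<le> (\<Sum>c\<in>?S. (real n + 1) * exp (- a * r))"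
    using \<open>?S \<subseteq> cells d\<close> prob_noisy_count_far[OF _ a] by (intro sum_mono) auto
  also have "\<dots> = card ?S * ((real n + 1) * exp (- a * r))"
    by simp
  also have "\<dots> \<le> 4 * real d * (real n)\<^sup>2 * ((real n + 1) * exp (- a * r))"
    using card_candidate_cells[OF n d, of D] of_nat_mono[where 'a = real]
    by (intro mult_right_mono) fastforce+
  finally show ?thesis .
qed

lemma pmf_noisy_counts_le:
  assumes "0 \<le> a"
  shows "pmf (noisy_counts a n d D) N
           \<le> exp (2 * a * (\<Sum>(v, u)\<in>cells d. \<bar>real (block_count n D v u) - real (block_count n D' v u)\<bar>))
             * pmf (noisy_counts a n d D') N"
proof (cases "\<forall>c. c \<notin> cells d \<longrightarrow> N c = 0")
  case True
  let ?p = "\<lambda>D c. pmf (trunc_laplace a n (block_count n D (fst c) (snd c))) (N c)"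
  let ?\<delta> = "\<lambda>c. \<bar>real (block_count n D (fst c) (snd c)) - real (block_count n D' (fst c) (snd c))\<bar>"
  have "pmf (noisy_counts a n d D) N = (\<Prod>c\<in>cells d. ?p D c)"
    unfolding noisy_counts_def using True by (simp add: pmf_Pi finite_cells case_prod_unfold)
  also have "\<dots> \<le> (\<Prod>c\<in>cells d. exp (2 * a * ?\<delta> c) * ?p D' c)"
    by (intro prod_mono conjI pmf_nonneg pmf_trunc_laplace_le_exp[OF assms])
  also have "\<dots> = exp (2 * a * (\<Sum>c\<in>cells d. ?\<delta> c)) * (\<Prod>c\<in>cells d. ?p D' c)"
    by (simp add: prod.distrib exp_sum finite_cells sum_distrib_left)
  also have "(\<Prod>c\<in>cells d. ?p D' c) = pmf (noisy_counts a n d D') N"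
    unfolding noisy_counts_def using True by (simp add: pmf_Pi finite_cells case_prod_unfold)
  finally show ?thesis
    by (simp add: case_prod_unfold)
next
  case False
  have "pmf (noisy_counts a n d D) N = 0"
    unfolding noisy_counts_def pmf_Pi[OF finite_cells] if_not_P[OF False] ..
  then show ?thesis by simp
qed

lemma block_count_diff:
  assumes "i < n" "\<forall>j<n. j \<noteq> i \<longrightarrow> D ! j = D' ! j"
  shows "real (block_count n D v u) - real (block_count n D' v u)
       = of_bool (block v (D ! i) = u) - of_bool (block v (D' ! i) = u)"
proof -
  have "real (block_count n E v u)
      = of_bool (block v (E ! i) = u) + (\<Sum>k\<in>{..<n} - {i}. of_bool (block v (E ! k) = u))" for E
  proof -
    have "real (block_count n E v u) = (\<Sum>k<n. of_bool (block v (E ! k) = u))"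
      unfolding block_count_def by (simp add: Int_def lessThan_def)
    then show ?thesis
      using assms(1) by (simp add: sum.remove[of "{..<n}" i] del: sum_of_bool_eq)
  qed
  moreover have "(\<Sum>k\<in>{..<n} - {i}. of_bool (block v (D ! k) = u) :: real)
      = (\<Sum>k\<in>{..<n} - {i}. of_bool (block v (D' ! k) = u))"
    using assms(2) by (intro sum.cong) auto
  ultimately show ?thesis by simp
qed

lemma sum_abs_of_bool_diff_le:
  assumes "finite A"
  shows "(\<Sum>u\<in>A. \<bar>of_bool (x = u) - of_bool (y = u) :: real\<bar>) \<le> 2 * of_bool (x \<noteq> y)"
proof (cases "x = y")
  case False
  have "(\<Sum>u\<in>A. \<bar>of_bool (x = u) - of_bool (y = u) :: real\<bar>)
      \<le> (\<Sum>u\<in>A. of_bool (x = u) + of_bool (y = u))"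
    by (intro sum_mono) auto
  also have "\<dots> = real (card (A \<inter> {x})) + real (card (A \<inter> {y}))"
    using assms by (simp add: sum.distrib eq_commute[of x] eq_commute[of y])
  also have "\<dots> \<le> 2"
    using card_mono[of "{x}" "A \<inter> {x}"] card_mono[of "{y}" "A \<inter> {y}"] by auto
  finally show ?thesis using False by simp
qed simp

lemma sum_card_filter_swap:
  assumes "finite A" "finite B"
  shows "(\<Sum>x\<in>A. card {y\<in>B. P x y}) = (\<Sum>y\<in>B. card {x\<in>A. P x y})"
proof -
  have "card {y\<in>B. P x y} = (\<Sum>y\<in>B. of_bool (P x y))" "card {x\<in>A. P x y} = (\<Sum>x\<in>A. of_bool (P x y))"
    for x y
    using assms by (simp_all add: Int_def conj_commute)
  then show ?thesis
    by (simp only: sum.swap[of _ A])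
qed

text \<open>Changing one sample changes, at each node, only the counts of its old and its new block,
  and only at nodes whose interval contains a coordinate where the two samples differ.\<close>

lemma cells_count_sensitivity:
  assumes D: "D \<in> datasets n d" "D' \<in> datasets n d" and i: "i < n"
    and agree: "\<forall>j<n. j \<noteq> i \<longrightarrow> D ! j = D' ! j" and d: "0 < d"
    and depth: "\<And>j. card {v \<in> dyadic_nodes 0 d. fst v \<le> j \<and> j < snd v} \<le> k"
  shows "(\<Sum>(v, u)\<in>cells d. \<bar>real (block_count n D v u) - real (block_count n D' v u)\<bar>)
       \<le> 2 * real k * real (hamming (D ! i) (D' ! i))"
proof -
  let ?x = "D ! i" and ?y = "D' ! i"
  let ?diff = "{j. j < length ?x \<and> ?x ! j \<noteq> ?y ! j}"
  let ?within = "\<lambda>v j. fst v \<le> j \<and> j < snd v"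
  have len: "length ?x = d" "length ?y = d"
    using datasets_nth_in_cube D i by (auto simp: cube_def)
  have "(\<Sum>(v, u)\<in>cells d. \<bar>real (block_count n D v u) - real (block_count n D' v u)\<bar>)
      = (\<Sum>v\<in>dyadic_nodes 0 d. \<Sum>u\<in>cube (snd v - fst v).
           \<bar>of_bool (block v ?x = u) - of_bool (block v ?y = u)\<bar>)"
    unfolding cells_def block_count_diff[OF i agree]
    by (rule sum.Sigma[symmetric]) (auto intro: finite_dyadic_nodes finite_cube)
  also have "\<dots> \<le> (\<Sum>v\<in>dyadic_nodes 0 d. 2 * of_bool (block v ?x \<noteq> block v ?y))"
    by (intro sum_mono sum_abs_of_bool_diff_le finite_cube)
  also have "\<dots> \<le> (\<Sum>v\<in>dyadic_nodes 0 d. 2 * real (card {j\<in>?diff. ?within v j}))"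
  proof (intro sum_mono)
    fix v assume v: "v \<in> dyadic_nodes 0 d"
    show "2 * of_bool (block v ?x \<noteq> block v ?y) \<le> 2 * real (card {j\<in>?diff. ?within v j})"
    proof (cases "block v ?x = block v ?y")
      case False
      then obtain j where "?within v j" "?x ! j \<noteq> ?y ! j"
        using block_neq_imp_nth_neq[OF False] dyadic_nodes_bounds[OF v d] len by auto
      then have "j \<in> {j\<in>?diff. ?within v j}"
        using dyadic_nodes_bounds[OF v d] len by auto
      then have "1 \<le> card {j\<in>?diff. ?within v j}"
        using card_mono[of "{j\<in>?diff. ?within v j}" "{j}"] by auto
      then show ?thesis
        using False by simp
    qed simp
  qed
  also have "\<dots> = 2 * (\<Sum>j\<in>?diff. real (card {v\<in>dyadic_nodes 0 d. ?within v j}))"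
    unfolding sum_distrib_left[symmetric] of_nat_sum[symmetric]
    using sum_card_filter_swap[OF finite_dyadic_nodes, of ?diff ?within] by simp
  also have "\<dots> \<le> 2 * (\<Sum>j\<in>?diff. real k)"
    using depth by (intro mult_left_mono sum_mono) auto
  also have "\<dots> = 2 * real k * real (hamming ?x ?y)"
    by (simp add: hamming_def)
  finally show ?thesis .
qed

lemma measure_pmf_le_if_pmf_le:
  assumes "\<And>x. pmf p x \<le> K * pmf q x"
  shows "measure_pmf.prob p A \<le> K * measure_pmf.prob q A"
proof -
  have "measure_pmf.prob p A = (\<integral>x. pmf p x \<partial>count_space A)"
    by (simp add: integral_pmf)
  also have "\<dots> \<le> (\<integral>x. K * pmf q x \<partial>count_space A)"
    by (intro integral_mono integrable_pmf integrable_mult_right assms)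
  also have "\<dots> = K * measure_pmf.prob q A"
    by (simp add: integral_pmf)
  finally show ?thesis .
qed

section \<open>The mechanism and its parameters\<close>

definition tree_mechanism :: "real \<Rightarrow> real \<Rightarrow> nat \<Rightarrow> nat \<Rightarrow> bool list list \<Rightarrow> (bool list \<Rightarrow> real) measure"
  where "tree_mechanism a r n d D = distr (noisy_counts a n d D) (out_space d) (estimate n d (2 * r))"

lemma measure_tree_mechanism:
  "S \<in> sets (out_space d) \<Longrightarrow>
     measure (tree_mechanism a r n d D) S = measure_pmf.prob (noisy_counts a n d D) (estimate n d (2 * r) -` S)"
  unfolding tree_mechanism_def by (subst measure_distr) (auto simp: estimate_in_space)

lemma is_mechanism_tree_mechanism: "is_mechanism n d (tree_mechanism a r n d)"
  unfolding is_mechanism_def tree_mechanism_def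
  by (auto intro!: measure_pmf.prob_space_distr simp: estimate_in_space)

lemma grad0_DP_tree_mechanism:
  fixes a \<epsilon> :: real
  assumes d: "0 < d" and a: "0 \<le> a"
    and depth: "\<And>j. card {v \<in> dyadic_nodes 0 d. fst v \<le> j \<and> j < snd v} \<le> k"
    and \<epsilon>: "4 * a * k \<le> \<epsilon>"
  shows "grad0_DP \<epsilon> n d (tree_mechanism a r n d)"
  unfolding grad0_DP_def
proof (intro ballI allI impI)
  fix D D' i S
  assume D: "D \<in> datasets n d" "D' \<in> datasets n d" and i: "i < n"
    and agree: "\<forall>j<n. j \<noteq> i \<longrightarrow> D ! j = D' ! j" and S: "S \<in> sets (out_space d)"
  let ?h = "real (hamming (D ! i) (D' ! i))"
  have "2 * a * (\<Sum>(v, u)\<in>cells d. \<bar>real (block_count n D v u) - real (block_count n D' v u)\<bar>)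
      \<le> 2 * a * (2 * real k * ?h)"
    using cells_count_sensitivity[OF D i agree d depth] a by (intro mult_left_mono) auto
  also have "\<dots> \<le> \<epsilon> * ?h"
    using mult_right_mono[OF \<epsilon>, of ?h] by (simp add: algebra_simps)
  finally have "exp (2 * a * (\<Sum>(v, u)\<in>cells d. \<bar>real (block_count n D v u) - real (block_count n D' v u)\<bar>))
      \<le> exp (\<epsilon> * ?h)"
    by simp
  then have "pmf (noisy_counts a n d D) N \<le> exp (\<epsilon> * ?h) * pmf (noisy_counts a n d D') N" for N
    using pmf_noisy_counts_le[OF a, of n d D N D'] by (meson mult_right_mono order.trans pmf_nonneg)
  then show "measure (tree_mechanism a r n d D) S \<le> exp (\<epsilon> * ?h) * measure (tree_mechanism a r n d D') S"
    unfolding measure_tree_mechanism[OF S] by (rule measure_pmf_le_if_pmf_le)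
qed

lemma tree_mechanism_error_prob:
  fixes a r :: real
  assumes D: "D \<in> datasets n d" and n: "0 < n" and d: "0 < d" and r: "0 < r" and a: "0 \<le> a"
  shows "1 - 4 * real d * (real n)\<^sup>2 * ((real n + 1) * exp (- a * r))
       \<le> measure (tree_mechanism a r n d D)
           {t \<in> space (out_space d). l2sq_error d t \<theta> \<le> 6 * r / n + 2 * l2sq_error d (empirical n D) \<theta>}"
    (is "_ \<le> measure _ ?A")
proof -
  have "{N. accurate n D r N 0 d} \<subseteq> estimate n d (2 * r) -` ?A"
    using l2sq_error_estimate_le[OF D n r] by (auto simp: estimate_in_space)
  then have "measure_pmf.prob (noisy_counts a n d D) {N. accurate n D r N 0 d}
      \<le> measure (tree_mechanism a r n d D) ?A"
    unfolding measure_tree_mechanism[OF l2sq_error_sublevel_in_sets]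
    by (intro measure_pmf.finite_measure_mono) auto
  moreover have "measure_pmf.prob (noisy_counts a n d D) {N. accurate n D r N 0 d}
      = 1 - measure_pmf.prob (noisy_counts a n d D) {N. \<not> accurate n D r N 0 d}"
    using measure_pmf.prob_compl[of "{N. \<not> accurate n D r N 0 d}" "noisy_counts a n d D"]
    by (simp add: Compl_eq_Diff_UNIV[symmetric] Collect_neg_eq[symmetric])
  ultimately show ?thesis
    using prob_not_accurate[OF D n d a, of r] by linarith
qed

lemma success_prob_tree_mechanism:
  fixes a r B :: real
  assumes \<theta>: "set_pmf \<theta> \<subseteq> cube d" and n: "0 < n" and d: "0 < d" and r: "0 < r" and a: "0 \<le> a"
    and fail: "4 * real d * (real n)\<^sup>2 * ((real n + 1) * exp (- a * r)) \<le> 1 / 20"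
    and B: "6 * r / n + 40 / n \<le> B"
  shows "0.9 \<le> success_prob n d (tree_mechanism a r n d) \<theta> B"
proof -
  let ?A = "{t \<in> space (out_space d). l2sq_error d t \<theta> \<le> B}"
  let ?good = "{D \<in> datasets n d. l2sq_error d (empirical n D) \<theta> \<le> 20 / n}"
  have space: "space (tree_mechanism a r n d D) = space (out_space d)" for D
    by (simp add: tree_mechanism_def)
  have good: "19 / 20 \<le> measure (tree_mechanism a r n d D) ?A" if "D \<in> ?good" for D
  proof -
    have "6 * r / n + 2 * l2sq_error d (empirical n D) \<theta> \<le> B"
      using that B by simp
    then have "{t \<in> space (out_space d). l2sq_error d t \<theta> \<le> 6 * r / n + 2 * l2sq_error d (empirical n D) \<theta>}
        \<subseteq> ?A"
      by auto
    then have "measure (tree_mechanism a r n d D)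
        {t \<in> space (out_space d). l2sq_error d t \<theta> \<le> 6 * r / n + 2 * l2sq_error d (empirical n D) \<theta>}
        \<le> measure (tree_mechanism a r n d D) ?A"
      unfolding measure_tree_mechanism[OF l2sq_error_sublevel_in_sets]
      by (intro measure_pmf.finite_measure_mono) auto
    then show ?thesis
      using tree_mechanism_error_prob[OF _ n d r a, of D \<theta>] that fail by simp
  qed
  have "(\<Sum>D\<in>?good. sample_prob n \<theta> D) * (19 / 20) \<le> (\<Sum>D\<in>?good. sample_prob n \<theta> D * measure (tree_mechanism a r n d D) ?A)"
    unfolding sum_distrib_right using good by (intro sum_mono mult_left_mono sample_prob_nonneg) auto
  also have "\<dots> \<le> success_prob n d (tree_mechanism a r n d) \<theta> B"
    unfolding success_prob_eq_sum space
    by (intro sum_mono2 finite_datasets) (auto intro!: mult_nonneg_nonneg sample_prob_nonneg)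
  finally have "(\<Sum>D\<in>?good. sample_prob n \<theta> D) * (19 / 20) \<le> success_prob n d (tree_mechanism a r n d) \<theta> B" .
  moreover have "19 / 20 * (19 / 20) \<le> (\<Sum>D\<in>?good. sample_prob n \<theta> D) * (19 / 20)"
    using prob_empirical_l2sq_error_le[OF \<theta> n] by (intro mult_right_mono) auto
  ultimately show ?thesis
    by linarith
qed

lemma one_le_ln:
  assumes "3 \<le> x"
  shows "1 \<le> ln (x :: real)"
proof -
  have "ln (exp 1) \<le> ln x"
    using exp_le assms by (intro ln_mono) auto
  then show ?thesis
    by simp
qed

lemma ln_160_d_n3_le:
  fixes d n x :: real
  assumes "0 < d" "0 < n" "d \<le> x" "n \<le> x" "3 \<le> x"
  shows "ln (160 * d * n ^ 3) \<le> 9 * ln x"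
proof -
  have "ln (160 * d * n ^ 3) \<le> ln (3 ^ 5 * x * x ^ 3)"
    using assms by (intro ln_mono mult_mono power_mono) auto
  also have "\<dots> = 5 * ln 3 + 4 * ln x"
    using assms ln_realpow[of 3 5] by (simp add: ln_mult ln_realpow)
  also have "\<dots> \<le> 9 * ln x"
    using assms(5) by simp
  finally show ?thesis .
qed

lemma log2_plus_2_le_4_ln:
  fixes d x :: real
  assumes "2 ^ k \<le> d" "d \<le> x" "3 \<le> x"
  shows "real k + 2 \<le> 4 * ln x"
proof -
  have "2 / 3 * real k \<le> ln 2 * real k"
    using ln2_ge_two_thirds by (intro mult_right_mono) auto
  also have "\<dots> = ln (2 ^ k)"
    by (simp add: ln_realpow)
  also have "\<dots> \<le> ln x"
    using assms(1,2) by (intro ln_mono) auto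
  finally show ?thesis
    using one_le_ln[OF assms(3)] by linarith
qed

lemma error_term_le:
  fixes \<epsilon> L F :: real
  assumes \<epsilon>: "0 < \<epsilon>" and n: "0 < n" and d: "0 < d" and L: "1 \<le> L"
    and k: "real k \<le> 4 * L" and F: "0 \<le> ln F" "ln F \<le> 9 * L"
  shows "6 * (4 * k * ln F / \<epsilon>) / n + 40 / n \<le> 2000 * L\<^sup>2 * (ln (real d + 1) / (\<epsilon> * real n) + 1 / real n)"
proof -
  have "24 * k * ln F \<le> 24 * (4 * L) * (9 * L)"
    using k F L by (intro mult_mono) auto
  also have "\<dots> \<le> 2000 * L\<^sup>2 * ln (real d + 1)"
  proof -
    have "ln 2 \<le> ln (real d + 1)"
      using d by (intro ln_mono) auto
    then have "2 / 3 \<le> ln (real d + 1)"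
      using ln2_ge_two_thirds by linarith
    then show ?thesis
      using L by (simp add: power2_eq_square mult_left_mono)
  qed
  finally have "6 * (4 * k * ln F / \<epsilon>) / n \<le> 2000 * L\<^sup>2 * (ln (real d + 1) / (\<epsilon> * real n))"
    using \<epsilon> n by (simp add: field_simps)
  moreover have "40 \<le> 2000 * L\<^sup>2"
    using one_le_power[OF L, of 2] by linarith
  then have "40 / n \<le> 2000 * L\<^sup>2 * (1 / real n)"
    by (simp add: divide_right_mono)
  ultimately show ?thesis
    by (simp add: distrib_left)
qed

lemma tree_mechanism_parameters:
  fixes \<epsilon> :: real
  assumes \<epsilon>: "0 < \<epsilon>" and n: "0 < n" and d: "0 < d"
  defines "L \<equiv> ln (real n + real d + 1 / \<epsilon> + 2)"
  obtains a r k where "0 \<le> a" "0 < r"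
    "\<And>j. card {v \<in> dyadic_nodes 0 d. fst v \<le> j \<and> j < snd v} \<le> k"
    "4 * a * k \<le> \<epsilon>"
    "4 * real d * (real n)\<^sup>2 * ((real n + 1) * exp (- a * r)) \<le> 1 / 20"
    "6 * r / n + 40 / n \<le> 2000 * L\<^sup>2 * (ln (real d + 1) / (\<epsilon> * real n) + 1 / real n)"
proof -
  define x where "x = real n + real d + 1 / \<epsilon> + 2"
  have "0 < 1 / \<epsilon>" "1 \<le> real n"
    using \<epsilon> n by auto
  then have x: "3 \<le> x" "real d \<le> x" "real n \<le> x"
    unfolding x_def by linarith+
  have L: "1 \<le> L"
    using one_le_ln[OF x(1)] unfolding L_def x_def .
  obtain k0 where k0: "2 ^ k0 \<le> d" "d < 2 ^ (k0 + 1)"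
    using ex_power_ivl1[of 2 d] d by auto
  define k where "k = k0 + 2"
  have depth: "card {v \<in> dyadic_nodes 0 d. fst v \<le> j \<and> j < snd v} \<le> k" for j
    using card_dyadic_nodes_covering[of 0 d "k0 + 1" j] k0 d unfolding k_def by simp
  have "(2 :: real) ^ k0 \<le> real d"
    using k0(1) by (metis numeral_power_le_of_nat_cancel_iff)
  then have k: "real k \<le> 4 * L"
    using log2_plus_2_le_4_ln[of k0 "real d" x] x unfolding k_def L_def x_def by simp
  define F where "F = 160 * real d * real n ^ 3"
  have "1 * 1 \<le> real d * real n ^ 3"
    using d n by (intro mult_mono one_le_power) auto
  then have F: "160 \<le> F"
    unfolding F_def by simp
  have ln_F: "ln F \<le> 9 * L"
    using ln_160_d_n3_le[of "real d" "real n" x] d n x unfolding F_def L_def x_def by simp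
  define a where "a = \<epsilon> / (4 * k)"
  define r where "r = ln F / a"
  have a: "0 < a"
    using \<epsilon> unfolding a_def k_def by simp
  have r: "0 < r"
    using a F unfolding r_def by simp
  have exp_ar: "exp (- a * r) = 1 / F"
    using a F unfolding r_def by (simp add: exp_minus inverse_eq_divide)
  show thesis
  proof (rule that)
    show "0 \<le> a" "0 < r"
      using a r by auto
    have "0 < real k"
      unfolding k_def by simp
    then show "4 * a * k \<le> \<epsilon>"
      unfolding a_def by (simp add: field_simps)
    show "card {v \<in> dyadic_nodes 0 d. fst v \<le> j \<and> j < snd v} \<le> k" for j
      by (rule depth)
    have "4 * real d * (real n)\<^sup>2 * (real n + 1) \<le> 4 * real d * (real n)\<^sup>2 * (2 * real n)"
      using n by (intro mult_left_mono) auto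
    then show "4 * real d * (real n)\<^sup>2 * ((real n + 1) * exp (- a * r)) \<le> 1 / 20"
      using F unfolding exp_ar F_def by (simp add: field_simps power2_eq_square power3_eq_cube)
    have "r = 4 * k * ln F / \<epsilon>"
      unfolding r_def a_def by simp
    then show "6 * r / n + 40 / n \<le> 2000 * L\<^sup>2 * (ln (real d + 1) / (\<epsilon> * real n) + 1 / real n)"
      using error_term_le[OF \<epsilon> n d L k _ ln_F] F by simp
  qed
qed

lemma exists_estimator_cube_0:
  fixes \<epsilon> B :: real
  assumes "0 < \<epsilon>" "0 \<le> B"
  shows "\<exists>M. is_mechanism n 0 M \<and> grad0_DP \<epsilon> n 0 M \<and>
           (\<forall>\<theta>::bool list pmf. set_pmf \<theta> \<subseteq> cube 0 \<longrightarrow> success_prob n 0 M \<theta> B \<ge> 0.9)"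
proof -
  define t where "t = (\<lambda>x\<in>cube 0. 1 :: real)"
  have t: "t \<in> space (out_space 0)"
    unfolding t_def space_out_space by auto
  define M where "M = (\<lambda>D :: bool list list. return (out_space 0) t)"
  have "is_mechanism n 0 M"
    unfolding is_mechanism_def M_def using prob_space_return[OF t] by simp
  moreover have "grad0_DP \<epsilon> n 0 M"
    unfolding grad0_DP_def M_def
  proof (intro ballI allI impI)
    fix D D' :: "bool list list" and i S
    have "1 \<le> exp (\<epsilon> * real (hamming (D ! i) (D' ! i)))"
      using assms(1) by simp
    then show "measure (return (out_space 0) t) S
        \<le> exp (\<epsilon> * real (hamming (D ! i) (D' ! i))) * measure (return (out_space 0) t) S"
      using mult_right_mono[of 1 _ "measure (return (out_space 0) t) S"] by simp
  qed
  moreover have "success_prob n 0 M \<theta> B \<ge> 0.9" if \<theta>: "set_pmf \<theta> \<subseteq> cube 0" for \<theta>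
  proof -
    have cube: "cube 0 = {[]}"
      unfolding cube_def by auto
    then have "pmf \<theta> [] = 1"
      using sum_pmf_eq_1[OF finite_cube \<theta>] by simp
    then have "l2sq_error 0 t \<theta> = 0"
      unfolding l2sq_error_def cube by (simp add: t_def cube)
    then have "measure (M D) {t \<in> space (M D). l2sq_error 0 t \<theta> \<le> B} = 1" for D
      using t assms(2) l2sq_error_sublevel_in_sets[of 0 \<theta> B] unfolding M_def by (simp add: measure_return)
    then show ?thesis
      unfolding success_prob_eq_sum using sum_sample_prob[OF \<theta>] by simp
  qed
  ultimately show ?thesis
    by blast
qed

lemma exists_private_estimator:
  fixes \<epsilon> :: real
  assumes \<epsilon>: "0 < \<epsilon>" and n: "1 \<le> n"
  shows "\<exists>M. is_mechanism n d M \<and> grad0_DP \<epsilon> n d M \<and>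
           (\<forall>\<theta>::bool list pmf. set_pmf \<theta> \<subseteq> cube d \<longrightarrow>
              success_prob n d M \<theta>
                (2000 * (ln (real n + real d + 1 / \<epsilon> + 2)) ^ 2 *
                   (ln (real d + 1) / (\<epsilon> * real n) + 1 / real n)) \<ge> 0.9)"
proof (cases "d = 0")
  case True
  then show ?thesis
    using exists_estimator_cube_0[OF \<epsilon>] by simp
next
  case False
  then have "0 < n" "0 < d"
    using n by auto
  then obtain a r k where a: "0 \<le> a" and r: "0 < r"
    and depth: "\<And>j. card {v \<in> dyadic_nodes 0 d. fst v \<le> j \<and> j < snd v} \<le> k"
    and privacy: "4 * a * k \<le> \<epsilon>"
    and failure: "4 * real d * (real n)\<^sup>2 * ((real n + 1) * exp (- a * r)) \<le> 1 / 20"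
    and error: "6 * r / n + 40 / n \<le> 2000 * (ln (real n + real d + 1 / \<epsilon> + 2))\<^sup>2
                                  * (ln (real d + 1) / (\<epsilon> * real n) + 1 / real n)"
    by (rule tree_mechanism_parameters[OF \<epsilon>]) blast
  show ?thesis
  proof (intro exI conjI allI impI)
    show "is_mechanism n d (tree_mechanism a r n d)"
      by (rule is_mechanism_tree_mechanism)
    show "grad0_DP \<epsilon> n d (tree_mechanism a r n d)"
      using \<open>0 < d\<close> a depth privacy by (rule grad0_DP_tree_mechanism)
    fix \<theta> :: "bool list pmf"
    assume "set_pmf \<theta> \<subseteq> cube d"
    then show "success_prob n d (tree_mechanism a r n d) \<theta>
        (2000 * (ln (real n + real d + 1 / \<epsilon> + 2)) ^ 2 * (ln (real d + 1) / (\<epsilon> * real n) + 1 / real n))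
        \<ge> 0.9"
      using \<open>0 < n\<close> \<open>0 < d\<close> r a failure error by (rule success_prob_tree_mechanism)
  qed
qed

theorem theorem5p5:
  "\<exists>C::real. \<exists>k::nat. C > 0 \<and>
     (\<forall>(\<epsilon>::real) (n::nat) (d::nat). \<epsilon> > 0 \<longrightarrow> n \<ge> 1 \<longrightarrow>
        (\<exists>M. is_mechanism n d M \<and> grad0_DP \<epsilon> n d M \<and>
           (\<forall>\<theta>::bool list pmf. set_pmf \<theta> \<subseteq> cube d \<longrightarrow>
              success_prob n d M \<theta>
                (C * (ln (real n + real d + 1 / \<epsilon> + 2)) ^ k *
                   (ln (real d + 1) / (\<epsilon> * real n) + 1 / real n))
              \<ge> 0.9)))"
  using exists_private_estimator by (intro exI[of _ "2000 :: real"] exI[of _ "2 :: nat"]) auto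

end
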